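(* Let $\Theta$ be a hypergraph and $p:V(\Theta)\to\mathbb{R}^d$. The framework $(p,\Theta)$ is universally globally Euclideanly rigid if and only if it is universally locally Euclideanly rigid.
   Context: A hypergraph $\Theta$ has a finite vertex set $V$ and hyperedges that are subsets of $V$. In $\mathbb{R}^k$, frameworks $(p,\Theta),(q,\Theta)$ are Euclidean-equivalent if for each hyperedge $h$ some Euclidean isometry $g_h$ of $\mathbb{R}^k$ satisfies $g_h(p(u))=q(u)$ for $u\in h$, and Euclidean-congruent if one isometry $g$ of $\mathbb{R}^k$ satisfies $g(p(u))=q(u)$ for all $u$. A framework is globally Euclideanly rigid in $\mathbb{R}^k$ if every Euclidean-equivalent framework in $\mathbb{R}^k$ is Euclidean-congruent to it, and locally Euclideanly rigid in $\mathbb{R}^k$ if this holds for all equivalent frameworks whose configurations lie in some neighborhood of $p$ in $(\mathbb{R}^k)^V$. Viewing $\mathbb{R}^d\subset\mathbb{R}^{d'}$ ($d'\ge d$) as the first $d$ coordinates, $(p,\Theta)$ is universally globally (resp. locally) Euclideanly rigid if it is globally (resp. locally) Euclideanly rigid in $\mathbb{R}^{d'}$ for every $d'\ge d$. *)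

theory Defs
  imports Main "HOL-Analysis.Analysis"
begin

text \<open>Points of R^k are modelled as functions nat => real whose coordinates
  with index >= k vanish; thus R^d is contained in R^d' (d <= d') as the
  first d coordinates.\<close>

definition inRk :: "nat \<Rightarrow> (nat \<Rightarrow> real) \<Rightarrow> bool" where
  "inRk k x \<longleftrightarrow> (\<forall>i\<ge>k. x i = 0)"

definition edist :: "nat \<Rightarrow> (nat \<Rightarrow> real) \<Rightarrow> (nat \<Rightarrow> real) \<Rightarrow> real" where
  "edist k x y = sqrt (\<Sum>i<k. (x i - y i)^2)"

definition eucl_isometry :: "nat \<Rightarrow> ((nat \<Rightarrow> real) \<Rightarrow> (nat \<Rightarrow> real)) \<Rightarrow> bool" where
  "eucl_isometry k g \<longleftrightarrow>
     (\<forall>x. inRk k x \<longrightarrow> inRk k (g x)) \<and>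
     (\<forall>x y. inRk k x \<longrightarrow> inRk k y \<longrightarrow> edist k (g x) (g y) = edist k x y) \<and>
     (\<forall>y. inRk k y \<longrightarrow> (\<exists>x. inRk k x \<and> g x = y))"

definition hypergraph :: "'v set \<Rightarrow> 'v set set \<Rightarrow> bool" where
  "hypergraph V H \<longleftrightarrow> finite V \<and> (\<forall>h\<in>H. h \<subseteq> V)"

definition config :: "nat \<Rightarrow> 'v set \<Rightarrow> ('v \<Rightarrow> nat \<Rightarrow> real) \<Rightarrow> bool" where
  "config k V q \<longleftrightarrow> (\<forall>u\<in>V. inRk k (q u))"

definition eucl_equivalent ::
  "nat \<Rightarrow> 'v set set \<Rightarrow> ('v \<Rightarrow> nat \<Rightarrow> real) \<Rightarrow> ('v \<Rightarrow> nat \<Rightarrow> real) \<Rightarrow> bool" where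
  "eucl_equivalent k H p q \<longleftrightarrow>
     (\<forall>h\<in>H. \<exists>g. eucl_isometry k g \<and> (\<forall>u\<in>h. g (p u) = q u))"

definition eucl_congruent ::
  "nat \<Rightarrow> 'v set \<Rightarrow> ('v \<Rightarrow> nat \<Rightarrow> real) \<Rightarrow> ('v \<Rightarrow> nat \<Rightarrow> real) \<Rightarrow> bool" where
  "eucl_congruent k V p q \<longleftrightarrow>
     (\<exists>g. eucl_isometry k g \<and> (\<forall>u\<in>V. g (p u) = q u))"

definition glob_rigid ::
  "nat \<Rightarrow> 'v set \<Rightarrow> 'v set set \<Rightarrow> ('v \<Rightarrow> nat \<Rightarrow> real) \<Rightarrow> bool" where
  "glob_rigid k V H p \<longleftrightarrow>
     (\<forall>q. config k V q \<and> eucl_equivalent k H p q \<longrightarrow> eucl_congruent k V p q)"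

definition loc_rigid ::
  "nat \<Rightarrow> 'v set \<Rightarrow> 'v set set \<Rightarrow> ('v \<Rightarrow> nat \<Rightarrow> real) \<Rightarrow> bool" where
  "loc_rigid k V H p \<longleftrightarrow>
     (\<exists>e>0. \<forall>q. config k V q \<and> (\<forall>u\<in>V. edist k (q u) (p u) < e) \<and>
               eucl_equivalent k H p q \<longrightarrow> eucl_congruent k V p q)"

definition univ_glob_rigid ::
  "nat \<Rightarrow> 'v set \<Rightarrow> 'v set set \<Rightarrow> ('v \<Rightarrow> nat \<Rightarrow> real) \<Rightarrow> bool" where
  "univ_glob_rigid d V H p \<longleftrightarrow> (\<forall>d'\<ge>d. glob_rigid d' V H p)"

definition univ_loc_rigid ::
  "nat \<Rightarrow> 'v set \<Rightarrow> 'v set set \<Rightarrow> ('v \<Rightarrow> nat \<Rightarrow> real) \<Rightarrow> bool" where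
  "univ_loc_rigid d V H p \<longleftrightarrow> (\<forall>d'\<ge>d. loc_rigid d' V H p)"

end

theory Submission
  imports Defs
begin

text \<open>Local rigidity trivially follows from global rigidity. Conversely, let \<open>q\<close> be
  Euclidean-equivalent to \<open>p\<close> in \<open>\<real>\<^sup>n\<close>. In \<open>\<real>\<^sup>2\<^sup>n\<close> the configuration
  \<open>r\<^sub>t = (cos t \<cdot> p, sin t \<cdot> q)\<close> has squared distances
  \<open>cos\<^sup>2 t \<cdot> |p\<^sub>u - p\<^sub>v|\<^sup>2 + sin\<^sup>2 t \<cdot> |q\<^sub>u - q\<^sub>v|\<^sup>2\<close>, so on every hyperedge it is congruent
  to \<open>p\<close>, and it tends to \<open>p\<close> as \<open>t \<rightarrow> 0\<close>. Local rigidity in \<open>\<real>\<^sup>2\<^sup>n\<close> makes \<open>r\<^sub>t\<close>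
  congruent to \<open>p\<close> for some small \<open>t > 0\<close>, which forces \<open>|q\<^sub>u - q\<^sub>v| = |p\<^sub>u - p\<^sub>v|\<close>
  for all vertices. Finally, finite families of points with the same pairwise distances are
  related by a global isometry, built from hyperplane reflections one point at a time.\<close>

definition sqdist :: "nat \<Rightarrow> (nat \<Rightarrow> real) \<Rightarrow> (nat \<Rightarrow> real) \<Rightarrow> real" where
  "sqdist k x y = (\<Sum>i<k. (x i - y i)^2)"

lemma edist_eq_sqrt_sqdist: "edist k x y = sqrt (sqdist k x y)"
  by (simp add: edist_def sqdist_def)

lemma sqdist_commute: "sqdist k x y = sqdist k y x"
  by (simp add: sqdist_def power2_commute)

lemma sqdist_self [simp]: "sqdist k x x = 0"
  by (simp add: sqdist_def)

lemma sqdist_eq_0_imp_eq: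
  assumes "inRk k x" "inRk k y" "sqdist k x y = 0"
  shows "x = y"
proof
  fix i show "x i = y i"
  proof (cases "i < k")
    case True
    then have "(x i - y i)^2 = 0"
      using assms(3) sum_nonneg_eq_0_iff[of "{..<k}" "\<lambda>i. (x i - y i)^2"]
      by (auto simp: sqdist_def)
    then show ?thesis by simp
  next
    case False
    then show ?thesis using assms(1,2) by (simp add: inRk_def)
  qed
qed

lemma sqdist_eq_if_inRk:
  assumes "inRk n x" "inRk n y" "n \<le> k"
  shows "sqdist k x y = sqdist n x y"
  unfolding sqdist_def by (rule sum.mono_neutral_right) (use assms in \<open>auto simp: inRk_def\<close>)

lemma inRk_mono: "inRk n x \<Longrightarrow> n \<le> k \<Longrightarrow> inRk k x"
  by (auto simp: inRk_def)

lemma config_mono: "config n V p \<Longrightarrow> n \<le> k \<Longrightarrow> config k V p"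
  by (auto simp: config_def intro: inRk_mono)

lemma eucl_isometry_id: "eucl_isometry k id"
  by (auto simp: eucl_isometry_def)

lemma eucl_isometry_comp:
  "eucl_isometry k f \<Longrightarrow> eucl_isometry k g \<Longrightarrow> eucl_isometry k (f \<circ> g)"
  unfolding eucl_isometry_def comp_def by metis

lemma eucl_isometry_inRk: "eucl_isometry k g \<Longrightarrow> inRk k x \<Longrightarrow> inRk k (g x)"
  unfolding eucl_isometry_def by blast

lemma eucl_isometry_sqdist:
  "eucl_isometry k g \<Longrightarrow> inRk k x \<Longrightarrow> inRk k y \<Longrightarrow> sqdist k (g x) (g y) = sqdist k x y"
  unfolding eucl_isometry_def by (metis edist_eq_sqrt_sqdist real_sqrt_eq_iff)

text \<open>Reflection in the perpendicular bisector of \<open>a\<close> and \<open>b\<close>. The coefficient of \<open>b - a\<close> is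
  affine in \<open>z\<close> (lemma \<open>sqdist_diff_eq\<close>); it is \<open>0\<close> exactly on the bisector and \<open>-1\<close> at \<open>a\<close>.
  For \<open>a = b\<close> the division by zero makes the map the identity.\<close>
definition reflection ::
  "nat \<Rightarrow> (nat \<Rightarrow> real) \<Rightarrow> (nat \<Rightarrow> real) \<Rightarrow> (nat \<Rightarrow> real) \<Rightarrow> (nat \<Rightarrow> real)" where
  "reflection k a b z =
     (\<lambda>i. z i - (sqdist k z a - sqdist k z b) / sqdist k b a * (b i - a i))"

lemma sqdist_diff_eq:
  "sqdist k z a - sqdist k z b = (\<Sum>j<k. (2 * z j - a j - b j) * (b j - a j))"
  unfolding sqdist_def sum_subtractf[symmetric]
  by (rule sum.cong) (auto simp: power2_eq_square algebra_simps)

lemma sqdist_reflection: "sqdist k (reflection k a b z) (reflection k a b w) = sqdist k z w"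
proof -
  define N where "N = sqdist k b a"
  define P where "P = (\<Sum>j<k. (z j - w j) * (b j - a j))"
  define c where "c = 2 * P / N"
  have N: "N = (\<Sum>j<k. (b j - a j)^2)"
    by (simp add: N_def sqdist_def)
  have "(sqdist k z a - sqdist k z b) - (sqdist k w a - sqdist k w b) = 2 * P"
    unfolding sqdist_diff_eq P_def sum_subtractf[symmetric] sum_distrib_left
    by (rule sum.cong) (auto simp: algebra_simps)
  moreover have "reflection k a b z i - reflection k a b w i
      = (z i - w i) - ((sqdist k z a - sqdist k z b) / N - (sqdist k w a - sqdist k w b) / N) * (b i - a i)" for i
    by (simp add: reflection_def N_def algebra_simps)
  ultimately have diff: "reflection k a b z i - reflection k a b w i = (z i - w i) - c * (b i - a i)" for i
    by (simp add: c_def diff_divide_distrib[symmetric])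
  have cancel: "c^2 * N = 2 * c * P"
  proof (cases "N = 0")
    case True
    then show ?thesis by (simp add: c_def)
  next
    case False
    then show ?thesis by (simp add: c_def power2_eq_square)
  qed
  have "sqdist k (reflection k a b z) (reflection k a b w) = (\<Sum>i<k. ((z i - w i) - c * (b i - a i))^2)"
    unfolding sqdist_def diff ..
  also have "\<dots> = (\<Sum>i<k. (z i - w i)^2 - 2 * c * ((z i - w i) * (b i - a i)) + c^2 * (b i - a i)^2)"
    by (rule sum.cong) (simp_all add: power2_eq_square algebra_simps)
  also have "\<dots> = sqdist k z w - 2 * c * P + c^2 * N"
    by (simp add: sum.distrib sum_subtractf sum_distrib_left sqdist_def P_def N)
  finally show ?thesis
    using cancel by simp
qed

lemma reflection_involutive:
  assumes "sqdist k b a \<noteq> 0"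
  shows "reflection k a b (reflection k a b z) = z"
proof -
  define N where "N = sqdist k b a"
  define c where "c = (sqdist k z a - sqdist k z b) / N"
  have N: "N = (\<Sum>j<k. (b j - a j) * (b j - a j))"
    by (simp add: N_def sqdist_def power2_eq_square)
  have z': "reflection k a b z = (\<lambda>i. z i - c * (b i - a i))"
    by (simp add: reflection_def c_def N_def)
  have "sqdist k (reflection k a b z) a - sqdist k (reflection k a b z) b
      = (\<Sum>j<k. (2 * z j - a j - b j) * (b j - a j) - 2 * c * ((b j - a j) * (b j - a j)))"
    unfolding sqdist_diff_eq z' by (rule sum.cong) (auto simp: algebra_simps)
  also have "\<dots> = (sqdist k z a - sqdist k z b) - 2 * c * N"
    by (simp add: sum_subtractf sum_distrib_left sqdist_diff_eq N)
  also have "\<dots> = - (sqdist k z a - sqdist k z b)"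
    using assms by (simp add: c_def N_def)
  finally have D: "sqdist k (reflection k a b z) a - sqdist k (reflection k a b z) b
      = - (sqdist k z a - sqdist k z b)" .
  moreover have "- (sqdist k z a - sqdist k z b) / sqdist k b a = - c"
    by (simp only: c_def N_def minus_divide_left)
  ultimately show ?thesis
    unfolding reflection_def[of k a b "reflection k a b z"] by (simp add: z')
qed

lemma reflection_swap:
  assumes "sqdist k b a \<noteq> 0"
  shows "reflection k a b a = b"
  using assms by (simp add: reflection_def sqdist_commute[of k a b] field_simps)

lemma reflection_fixes_bisector:
  "sqdist k z a = sqdist k z b \<Longrightarrow> reflection k a b z = z"
  by (simp add: reflection_def)

lemma eucl_isometry_reflection:
  assumes "inRk k a" "inRk k b" "a \<noteq> b"
  shows "eucl_isometry k (reflection k a b)"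
proof -
  have N: "sqdist k b a \<noteq> 0"
    using sqdist_eq_0_imp_eq[OF assms(2,1)] assms(3) by auto
  have inRk: "inRk k (reflection k a b x)" if "inRk k x" for x
    using that assms(1,2) by (auto simp: inRk_def reflection_def)
  show ?thesis
    unfolding eucl_isometry_def edist_eq_sqrt_sqdist sqdist_reflection
    using inRk reflection_involutive[OF N] by metis
qed

lemma eucl_isometry_extension:
  assumes "finite S" "\<forall>u\<in>S. inRk k (x u) \<and> inRk k (y u)"
    and "\<forall>u\<in>S. \<forall>v\<in>S. sqdist k (x u) (x v) = sqdist k (y u) (y v)"
  shows "\<exists>g. eucl_isometry k g \<and> (\<forall>u\<in>S. g (x u) = y u)"
  using assms
proof (induction S rule: finite_induct)
  case empty
  then show ?case using eucl_isometry_id by blast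
next
  case (insert w S)
  then obtain g where g: "eucl_isometry k g" "\<forall>u\<in>S. g (x u) = y u"
    by auto
  define a where "a = g (x w)"
  define b where "b = y w"
  have a: "inRk k a" and b: "inRk k b"
    using eucl_isometry_inRk[OF g(1)] insert.prems by (auto simp: a_def b_def)
  show ?case
  proof (cases "a = b")
    case True
    then show ?thesis using g by (auto simp: a_def b_def)
  next
    case False
    have "sqdist k (y u) a = sqdist k (y u) b" if "u \<in> S" for u
    proof -
      have "sqdist k (y u) a = sqdist k (g (x u)) (g (x w))"
        using g(2) that by (simp add: a_def)
      also have "\<dots> = sqdist k (x u) (x w)"
        using eucl_isometry_sqdist[OF g(1)] insert.prems that by simp
      finally show ?thesis
        using insert.prems that by (simp add: b_def)
    qed
    then have "\<forall>u\<in>S. reflection k a b (g (x u)) = y u"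
      using g(2) reflection_fixes_bisector by simp
    moreover have "reflection k a b (g (x w)) = y w"
      using reflection_swap sqdist_eq_0_imp_eq[OF b a] False by (auto simp: a_def b_def)
    ultimately show ?thesis
      using eucl_isometry_comp[OF eucl_isometry_reflection[OF a b False] g(1)] by auto
  qed
qed

lemma eucl_congruent_iff_sqdist:
  assumes "finite V" "config k V p" "config k V q"
  shows "eucl_congruent k V p q \<longleftrightarrow> (\<forall>u\<in>V. \<forall>v\<in>V. sqdist k (p u) (p v) = sqdist k (q u) (q v))"
proof
  assume "eucl_congruent k V p q"
  then obtain g where g: "eucl_isometry k g" "\<forall>u\<in>V. g (p u) = q u"
    by (auto simp: eucl_congruent_def)
  show "\<forall>u\<in>V. \<forall>v\<in>V. sqdist k (p u) (p v) = sqdist k (q u) (q v)"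
  proof (intro ballI)
    fix u v assume uv: "u \<in> V" "v \<in> V"
    have "sqdist k (q u) (q v) = sqdist k (g (p u)) (g (p v))"
      using g(2) uv by simp
    also have "\<dots> = sqdist k (p u) (p v)"
      using eucl_isometry_sqdist[OF g(1)] assms(2) uv by (simp add: config_def)
    finally show "sqdist k (p u) (p v) = sqdist k (q u) (q v)" ..
  qed
next
  assume "\<forall>u\<in>V. \<forall>v\<in>V. sqdist k (p u) (p v) = sqdist k (q u) (q v)"
  then show "eucl_congruent k V p q"
    unfolding eucl_congruent_def using assms by (intro eucl_isometry_extension) (auto simp: config_def)
qed

lemma eucl_equivalent_iff_sqdist:
  assumes "hypergraph V H" "config k V p" "config k V q"
  shows "eucl_equivalent k H p q \<longleftrightarrow>
    (\<forall>h\<in>H. \<forall>u\<in>h. \<forall>v\<in>h. sqdist k (p u) (p v) = sqdist k (q u) (q v))"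
proof -
  have "eucl_equivalent k H p q \<longleftrightarrow> (\<forall>h\<in>H. eucl_congruent k h p q)"
    by (simp add: eucl_equivalent_def eucl_congruent_def)
  moreover have "finite h" "config k h p" "config k h q" if "h \<in> H" for h
    using assms that by (auto simp: hypergraph_def config_def intro: rev_finite_subset)
  ultimately show ?thesis
    by (simp add: eucl_congruent_iff_sqdist)
qed

definition scaled_concat ::
  "nat \<Rightarrow> real \<Rightarrow> real \<Rightarrow> (nat \<Rightarrow> real) \<Rightarrow> (nat \<Rightarrow> real) \<Rightarrow> (nat \<Rightarrow> real)" where
  "scaled_concat n c s x y = (\<lambda>i. if i < n then c * x i else if i < 2 * n then s * y (i - n) else 0)"

lemma inRk_scaled_concat: "inRk (2 * n) (scaled_concat n c s x y)"
  by (simp add: inRk_def scaled_concat_def)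

lemma sqdist_scaled_concat:
  "sqdist (2 * n) (scaled_concat n c s x y) (scaled_concat n c s x' y')
     = c^2 * sqdist n x x' + s^2 * sqdist n y y'"
proof -
  let ?f = "\<lambda>i. (scaled_concat n c s x y i - scaled_concat n c s x' y' i)^2"
  have "sqdist (2 * n) (scaled_concat n c s x y) (scaled_concat n c s x' y')
      = sum ?f {0..<n} + sum ?f {n..<n + n}"
    unfolding sqdist_def by (simp add: sum.atLeastLessThan_concat lessThan_atLeast0 mult_2)
  also have "sum ?f {0..<n} = c^2 * sqdist n x x'"
    unfolding sqdist_def sum_distrib_left lessThan_atLeast0
    by (rule sum.cong) (auto simp: scaled_concat_def power2_eq_square algebra_simps)
  also have "sum ?f {n..<n + n} = sum (?f \<circ> plus n) {0..<n}"
    using sum.atLeastLessThan_shift_bounds[of ?f 0 n n] by (simp add: add.commute)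
  also have "\<dots> = s^2 * sqdist n y y'"
    unfolding sqdist_def sum_distrib_left lessThan_atLeast0
    by (rule sum.cong) (auto simp: scaled_concat_def power2_eq_square algebra_simps)
  finally show ?thesis .
qed

lemma tendsto_scaled_concat_cos_sin:
  assumes "inRk n x"
  shows "((\<lambda>t. edist (2 * n) (scaled_concat n (cos t) (sin t) x y) x) \<longlongrightarrow> 0) (at 0 within S)"
proof -
  let ?r = "\<lambda>t. scaled_concat n (cos t) (sin t) x y"
  have "((\<lambda>t. ?r t i) \<longlongrightarrow> ?r 0 i) (at 0 within S)" for i
    by (auto simp: scaled_concat_def intro!: tendsto_eq_intros)
  then have "((\<lambda>t. edist (2 * n) (?r t) x) \<longlongrightarrow> edist (2 * n) (?r 0) x) (at 0 within S)"
    unfolding edist_def by (intro tendsto_intros)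
  moreover have "?r 0 = x"
    using assms by (auto simp: scaled_concat_def inRk_def)
  ultimately show ?thesis
    by (simp add: edist_def)
qed

lemma scaled_concat_cos_sin_near:
  assumes "finite V" "config n V p" "e > 0"
  obtains t where "0 < t" "t < 1"
    and "\<forall>u\<in>V. edist (2 * n) (scaled_concat n (cos t) (sin t) (p u) (q u)) (p u) < e"
proof -
  have "((\<lambda>t. edist (2 * n) (scaled_concat n (cos t) (sin t) (p u) (q u)) (p u)) \<longlongrightarrow> 0)
      (at_right 0)" if "u \<in> V" for u
    using assms(2) that by (intro tendsto_scaled_concat_cos_sin) (simp add: config_def)
  then have "\<forall>\<^sub>F t in at_right 0.
      \<forall>u\<in>V. edist (2 * n) (scaled_concat n (cos t) (sin t) (p u) (q u)) (p u) < e"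
    using assms(3) by (intro eventually_ball_finite[OF assms(1)] ballI order_tendstoD(2))
  then show ?thesis
    using that eventually_happens[OF eventually_conj[OF _ eventually_at_right_real[of 0 1]]]
    by auto
qed

lemma glob_rigid_imp_loc_rigid: "glob_rigid k V H p \<Longrightarrow> loc_rigid k V H p"
  unfolding glob_rigid_def loc_rigid_def using zero_less_one by blast

lemma loc_rigid_double_dim_imp_glob_rigid:
  assumes "hypergraph V H" "config n V p" "loc_rigid (2 * n) V H p"
  shows "glob_rigid n V H p"
  unfolding glob_rigid_def
proof (intro allI impI, elim conjE)
  fix q
  assume q: "config n V q" and equiv: "eucl_equivalent n H p q"
  have fin: "finite V" and edges: "\<forall>h\<in>H. h \<subseteq> V"
    using assms(1) by (auto simp: hypergraph_def)
  have p2: "config (2 * n) V p"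
    using assms(2) by (rule config_mono) simp
  have p2_sqdist: "sqdist (2 * n) (p u) (p v) = sqdist n (p u) (p v)" if "u \<in> V" "v \<in> V" for u v
    using assms(2) that by (intro sqdist_eq_if_inRk) (auto simp: config_def)
  obtain e where e: "e > 0" and loc: "\<And>r. config (2 * n) V r \<Longrightarrow> \<forall>u\<in>V. edist (2 * n) (r u) (p u) < e
      \<Longrightarrow> eucl_equivalent (2 * n) H p r \<Longrightarrow> eucl_congruent (2 * n) V p r"
    using assms(3) by (auto simp: loc_rigid_def)
  define r where "r t = (\<lambda>u. scaled_concat n (cos t) (sin t) (p u) (q u))" for t
  have r: "config (2 * n) V (r t)" for t
    by (simp add: config_def r_def inRk_scaled_concat)
  have r_sqdist: "sqdist (2 * n) (r t u) (r t v)
      = (cos t)^2 * sqdist n (p u) (p v) + (sin t)^2 * sqdist n (q u) (q v)" for t u v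
    unfolding r_def by (rule sqdist_scaled_concat)
  obtain t where t: "0 < t" "t < 1" and near: "\<forall>u\<in>V. edist (2 * n) (r t u) (p u) < e"
    using scaled_concat_cos_sin_near[OF fin assms(2) e] unfolding r_def by blast
  have "\<forall>h\<in>H. \<forall>u\<in>h. \<forall>v\<in>h. sqdist n (p u) (p v) = sqdist n (q u) (q v)"
    using equiv eucl_equivalent_iff_sqdist[OF assms(1,2) q] by simp
  then have "eucl_equivalent (2 * n) H p (r t)"
    unfolding eucl_equivalent_iff_sqdist[OF assms(1) p2 r] using edges
    by (auto simp: r_sqdist p2_sqdist subset_iff distrib_right[symmetric])
  then have "eucl_congruent (2 * n) V p (r t)"
    using loc r near by blast
  then have "sqdist n (p u) (p v) = sqdist n (q u) (q v)" if "u \<in> V" "v \<in> V" for u v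
  proof -
    assume "eucl_congruent (2 * n) V p (r t)"
    then have "(cos t)^2 * sqdist n (p u) (p v) + (sin t)^2 * sqdist n (q u) (q v)
        = sqdist n (p u) (p v)"
      using eucl_congruent_iff_sqdist[OF fin p2 r] r_sqdist p2_sqdist that by simp
    then have "(sin t)^2 * (sqdist n (q u) (q v) - sqdist n (p u) (p v)) = 0"
      unfolding cos_squared_eq left_diff_distrib right_diff_distrib mult_1 by linarith
    moreover have "sin t \<noteq> 0"
      using t pi_gt3 sin_gt_zero[of t] by linarith
    ultimately show ?thesis by simp
  qed
  then show "eucl_congruent n V p q"
    using eucl_congruent_iff_sqdist[OF fin assms(2) q] by simp
qed

theorem lemma2p11:
  fixes V :: "'v set" and H :: "'v set set" and p :: "'v \<Rightarrow> nat \<Rightarrow> real" and d :: nat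
  assumes "hypergraph V H" and "config d V p"
  shows "univ_glob_rigid d V H p \<longleftrightarrow> univ_loc_rigid d V H p"
proof
  assume "univ_glob_rigid d V H p"
  then show "univ_loc_rigid d V H p"
    by (simp add: univ_glob_rigid_def univ_loc_rigid_def glob_rigid_imp_loc_rigid)
next
  assume loc: "univ_loc_rigid d V H p"
  have "glob_rigid d' V H p" if "d \<le> d'" for d'
    using loc that assms config_mono[OF assms(2) that]
    by (intro loc_rigid_double_dim_imp_glob_rigid) (auto simp: univ_loc_rigid_def)
  then show "univ_glob_rigid d V H p"
    by (simp add: univ_glob_rigid_def)
qed

end
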